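(* The word $f=111000$ is tilde-isometric.
   Context: Words are over $\{0,1\}$. A word is $f$-free if it does not contain $f$ as a factor. Operations: the replacement $R_i$ flips the symbol at position $i$ and modifies position $i$. The swap $S_i$ is defined when $a_i\ne a_{i+1}$, exchanges these two symbols, and modifies positions $i,i+1$. $\mathrm{dist}_\sim(u,v)$ is the minimum number of replacements and swaps transforming $u$ into the equal-length word $v$. A tilde-transformation from $u$ to $v$ is a sequence of words from $u$ to $v$, each obtained from the previous by one replacement or swap. It is $f$-free if all its words are $f$-free. It is minimal if it uses exactly $\mathrm{dist}_\sim(u,v)$ operations and each position is modified by at most one operation. A word $f$ of length $n$ is tilde-isometric if, for every $m>n$ and all $f$-free $u,v\in\{0,1\}^m$, there exists a minimal tilde-transformation from $u$ to $v$ that is $f$-free. *)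

theory Defs
  imports Main "HOL-Library.Sublist"
begin

text \<open>Binary words are represented as bool lists (True = 1, False = 0);
positions are 0-indexed.\<close>

definition f_free :: "bool list \<Rightarrow> bool list \<Rightarrow> bool" where
  "f_free f w \<longleftrightarrow> \<not> sublist f w"

datatype edit_op = Rep nat | Swp nat

fun op_ok :: "bool list \<Rightarrow> edit_op \<Rightarrow> bool" where
  "op_ok w (Rep i) = (i < length w)"
| "op_ok w (Swp i) = (Suc i < length w \<and> w ! i \<noteq> w ! Suc i)"

fun apply_op :: "bool list \<Rightarrow> edit_op \<Rightarrow> bool list" where
  "apply_op w (Rep i) = w[i := \<not> w ! i]"
| "apply_op w (Swp i) = w[i := w ! Suc i, Suc i := w ! i]"

fun modified :: "edit_op \<Rightarrow> nat set" where
  "modified (Rep i) = {i}"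
| "modified (Swp i) = {i, Suc i}"

fun valid_ops :: "bool list \<Rightarrow> edit_op list \<Rightarrow> bool" where
  "valid_ops w [] = True"
| "valid_ops w (o1 # os) = (op_ok w o1 \<and> valid_ops (apply_op w o1) os)"

fun run :: "bool list \<Rightarrow> edit_op list \<Rightarrow> bool list list" where
  "run w [] = [w]"
| "run w (o1 # os) = w # run (apply_op w o1) os"

definition transforms :: "bool list \<Rightarrow> edit_op list \<Rightarrow> bool list \<Rightarrow> bool" where
  "transforms u os v \<longleftrightarrow> valid_ops u os \<and> last (run u os) = v"

definition dist_tilde :: "bool list \<Rightarrow> bool list \<Rightarrow> nat" where
  "dist_tilde u v = (LEAST k. \<exists>os. transforms u os v \<and> length os = k)"

definition minimal_transformation :: "bool list \<Rightarrow> edit_op list \<Rightarrow> bool list \<Rightarrow> bool" where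
  "minimal_transformation u os v \<longleftrightarrow>
     transforms u os v \<and> length os = dist_tilde u v \<and>
     (\<forall>i j. i < j \<and> j < length os \<longrightarrow> modified (os ! i) \<inter> modified (os ! j) = {})"

definition f_free_transformation :: "bool list \<Rightarrow> bool list \<Rightarrow> edit_op list \<Rightarrow> bool" where
  "f_free_transformation f u os \<longleftrightarrow> (\<forall>w \<in> set (run u os). f_free f w)"

definition tilde_isometric :: "bool list \<Rightarrow> bool" where
  "tilde_isometric f \<longleftrightarrow>
     (\<forall>m > length f. \<forall>u v. length u = m \<and> length v = m \<and> f_free f u \<and> f_free f v \<longrightarrow>
        (\<exists>os. minimal_transformation u os v \<and> f_free_transformation f u os))"

end

theory Submission
  imports Defs
begin

text \<open>
  A transformation with \<open>n\<close> operations can be simulated by at most \<open>n\<close> operations with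
  pairwise disjoint positions, applied simultaneously (a parallel edit); so a parallel edit of
  minimum size realises the distance, and by minimality it never contains two adjacent
  replacements that one swap could do instead. It remains to order such an edit so that every
  intermediate word avoids \<open>f = 111000\<close>, and for this it suffices that some single operation
  of it can always be applied first without creating \<open>f\<close>. If the leftmost operation cannot,
  and the other operations applied together already create \<open>f\<close> (otherwise recurse on them),
  then the second leftmost one can: the three occurrences of \<open>f\<close> that would arise are confined
  to a bounded window around the two operations, where an exhaustive check shows that they
  cannot coexist.
\<close>

definition occurs_at :: "bool list \<Rightarrow> (nat \<Rightarrow> bool) \<Rightarrow> nat \<Rightarrow> bool" where
  "occurs_at f g s \<longleftrightarrow> (\<forall>i<length f. g (s + i) = f ! i)"

lemma sublist_iff_occurs_at:
  "sublist f w \<longleftrightarrow> (\<exists>s. s + length f \<le> length w \<and> occurs_at f ((!) w) s)"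
proof
  assume "sublist f w"
  then obtain ps ss where "w = ps @ f @ ss"
    unfolding sublist_def by blast
  then show "\<exists>s. s + length f \<le> length w \<and> occurs_at f ((!) w) s"
    by (intro exI[of _ "length ps"]) (simp add: occurs_at_def nth_append)
next
  assume "\<exists>s. s + length f \<le> length w \<and> occurs_at f ((!) w) s"
  then obtain s where s: "s + length f \<le> length w" "occurs_at f ((!) w) s"
    by blast
  have "take (length f) (drop s w) = f"
    using s by (intro nth_equalityI) (auto simp: occurs_at_def add.commute)
  then have "w = take s w @ f @ drop (length f) (drop s w)"
    by (metis append_take_drop_id)
  then show "sublist f w"
    unfolding sublist_def by blast
qed

lemma occurs_at_shift:
  "(\<And>i. i < length f \<Longrightarrow> h (t + i) = g (s + i)) \<Longrightarrow> occurs_at f h t = occurs_at f g s"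
  unfolding occurs_at_def by simp

lemma f_free_iff_no_occurrence:
  "f_free f w \<longleftrightarrow> (\<forall>s. s + length f \<le> length w \<longrightarrow> \<not> occurs_at f ((!) w) s)"
  unfolding f_free_def sublist_iff_occurs_at by blast

lemma occurrence_meets_difference:
  assumes "f_free f w" "s + length f \<le> length w" "occurs_at f g s"
    and "\<And>j. j < length w \<Longrightarrow> j \<notin> D \<Longrightarrow> g j = w ! j"
  obtains j where "j \<in> D" "s \<le> j" "j < s + length f"
proof -
  have "\<not> occurs_at f ((!) w) s"
    using assms(1,2) unfolding f_free_iff_no_occurrence by blast
  then obtain i where "i < length f" "g (s + i) \<noteq> w ! (s + i)"
    using assms(3) unfolding occurs_at_def by metis
  then show ?thesis
    using that assms(2) assms(4)[of "s + i"] by fastforce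
qed

lemma length_apply_op [simp]: "length (apply_op w x) = length w"
  by (cases x) auto

lemma nth_apply_op_unmodified: "k \<notin> modified x \<Longrightarrow> apply_op w x ! k = w ! k"
  by (cases x) auto

lemma op_ok_modified_less: "op_ok w x \<Longrightarrow> k \<in> modified x \<Longrightarrow> k < length w"
  by (cases x) auto

lemma op_ok_cong:
  "length w1 = length w2 \<Longrightarrow> (\<forall>k\<in>modified x. w1 ! k = w2 ! k) \<Longrightarrow> op_ok w1 x = op_ok w2 x"
  by (cases x) auto

lemma finite_modified [simp]: "finite (modified x)"
  by (cases x) auto

lemma modified_nonempty [simp]: "modified x \<noteq> {}"
  by (cases x) auto

lemma card_modified_le: "card (modified x) \<le> 2"
  by (cases x) (auto simp: card_insert_if)

fun op_pos :: "edit_op \<Rightarrow> nat" where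
  "op_pos (Rep i) = i"
| "op_pos (Swp i) = i"

fun is_swap :: "edit_op \<Rightarrow> bool" where
  "is_swap (Rep i) = False"
| "is_swap (Swp i) = True"

lemma modified_iff: "j \<in> modified x \<longleftrightarrow> j = op_pos x \<or> is_swap x \<and> j = op_pos x + 1"
  by (cases x) auto

section \<open>Parallel edits\<close>

definition disjoint_ops :: "edit_op set \<Rightarrow> bool" where
  "disjoint_ops S \<longleftrightarrow> (\<forall>x\<in>S. \<forall>y\<in>S. x \<noteq> y \<longrightarrow> modified x \<inter> modified y = {})"

definition parallel_nth :: "bool list \<Rightarrow> edit_op set \<Rightarrow> nat \<Rightarrow> bool" where
  "parallel_nth w S k =
     (if Rep k \<in> S then \<not> w ! k
      else if Swp k \<in> S then w ! Suc k
      else if 0 < k \<and> Swp (k - 1) \<in> S then w ! (k - 1)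
      else w ! k)"

text \<open>\<open>parallel_nth\<close> reads off the effect of \<open>S\<close> correctly only when no two operations of \<open>S\<close>
  share a position; \<open>parallel_edit\<close> requires this.\<close>

definition apply_parallel :: "bool list \<Rightarrow> edit_op set \<Rightarrow> bool list" where
  "apply_parallel w S = map (parallel_nth w S) [0..<length w]"

definition parallel_edit :: "bool list \<Rightarrow> edit_op set \<Rightarrow> bool list \<Rightarrow> bool" where
  "parallel_edit u S v \<longleftrightarrow>
     finite S \<and> disjoint_ops S \<and> (\<forall>x\<in>S. op_ok u x) \<and> apply_parallel u S = v"

lemma length_apply_parallel [simp]: "length (apply_parallel w S) = length w"
  by (simp add: apply_parallel_def)

lemma nth_apply_parallel: "k < length w \<Longrightarrow> apply_parallel w S ! k = parallel_nth w S k"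
  by (simp add: apply_parallel_def)

lemma disjoint_ops_subset: "disjoint_ops S \<Longrightarrow> T \<subseteq> S \<Longrightarrow> disjoint_ops T"
  unfolding disjoint_ops_def by blast

lemma disjoint_opsD:
  "disjoint_ops S \<Longrightarrow> x \<in> S \<Longrightarrow> y \<in> S \<Longrightarrow> k \<in> modified x \<Longrightarrow> k \<in> modified y \<Longrightarrow> x = y"
  unfolding disjoint_ops_def by blast

lemma parallel_nth_untouched: "\<forall>x\<in>S. k \<notin> modified x \<Longrightarrow> parallel_nth w S k = w ! k"
  by (cases k) (force simp: parallel_nth_def)+

lemma parallel_nth_Rep: "Rep k \<in> S \<Longrightarrow> parallel_nth w S k = (\<not> w ! k)"
  by (simp add: parallel_nth_def)

lemma parallel_nth_Swp:
  assumes "Swp i \<in> S" "disjoint_ops S"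
  shows "parallel_nth w S i = w ! Suc i" and "parallel_nth w S (Suc i) = w ! i"
proof -
  have "Rep i \<notin> S" "Rep (Suc i) \<notin> S" "Swp (Suc i) \<notin> S"
    using assms disjoint_opsD[OF assms(2) assms(1)] by force+
  then show "parallel_nth w S i = w ! Suc i" "parallel_nth w S (Suc i) = w ! i"
    using assms by (simp_all add: parallel_nth_def)
qed

lemma parallel_nth_modified:
  assumes "x \<in> S" "disjoint_ops S" "op_ok w x" "k \<in> modified x"
  shows "parallel_nth w S k = apply_op w x ! k"
  using assms parallel_nth_Rep parallel_nth_Swp by (cases x) auto

lemma parallel_nth_cong:
  assumes "x \<in> S1" "x \<in> S2" "disjoint_ops S1" "disjoint_ops S2" "k \<in> modified x"
    and "\<forall>j\<in>modified x. w1 ! j = w2 ! j"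
  shows "parallel_nth w1 S1 k = parallel_nth w2 S2 k"
  using assms parallel_nth_Rep parallel_nth_Swp by (cases x) auto

lemma nth_apply_op_member:
  assumes "x \<in> S" "disjoint_ops S" "op_ok w x" "k < length w"
  shows "apply_op w x ! k = (if k \<in> modified x then apply_parallel w S ! k else w ! k)"
  using assms parallel_nth_modified[OF assms(1-3)] nth_apply_op_unmodified[of k x w]
  by (simp add: nth_apply_parallel)

lemma nth_apply_parallel_remove:
  assumes "x \<in> S" "disjoint_ops S" "k < length w"
  shows "apply_parallel w (S - {x}) ! k = (if k \<in> modified x then w ! k else apply_parallel w S ! k)"
proof (cases "\<exists>y\<in>S. k \<in> modified y")
  case True
  then obtain y where y: "y \<in> S" "k \<in> modified y" by blast
  show ?thesis
  proof (cases "y = x")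
    case True
    then have "\<forall>z\<in>S - {x}. k \<notin> modified z"
      using y disjoint_opsD[OF assms(2)] by blast
    then show ?thesis
      using assms(3) y True by (simp add: nth_apply_parallel parallel_nth_untouched)
  next
    case False
    then have "k \<notin> modified x"
      using y assms(1) disjoint_opsD[OF assms(2)] by blast
    moreover have "parallel_nth w (S - {x}) k = parallel_nth w S k"
      using parallel_nth_cong[of y "S - {x}" S k w w] y False assms(2) disjoint_ops_subset[OF assms(2)]
      by blast
    ultimately show ?thesis
      using assms(3) by (simp add: nth_apply_parallel)
  qed
next
  case False
  then show ?thesis
    using assms(3) by (simp add: nth_apply_parallel parallel_nth_untouched)
qed

lemma apply_parallel_empty [simp]: "apply_parallel w {} = w"
  by (rule nth_equalityI) (auto simp: nth_apply_parallel parallel_nth_def)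

lemma apply_parallel_remove:
  assumes x: "x \<in> S" and d: "disjoint_ops S" and ok: "\<forall>y\<in>S. op_ok w y"
  shows "apply_parallel (apply_op w x) (S - {x}) = apply_parallel w S"
proof (rule nth_equalityI)
  fix k assume "k < length (apply_parallel (apply_op w x) (S - {x}))"
  then have k: "k < length w" by simp
  have d': "disjoint_ops (S - {x})"
    using d disjoint_ops_subset by blast
  show "apply_parallel (apply_op w x) (S - {x}) ! k = apply_parallel w S ! k"
  proof (cases "\<exists>y\<in>S. k \<in> modified y")
    case True
    then obtain y where y: "y \<in> S" "k \<in> modified y" by blast
    show ?thesis
    proof (cases "y = x")
      case True
      then have "\<forall>z\<in>S - {x}. k \<notin> modified z"
        using y disjoint_opsD[OF d] by blast
      then show ?thesis
        using k y True ok parallel_nth_modified[OF x d]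
        by (simp add: nth_apply_parallel parallel_nth_untouched)
    next
      case False
      then have "\<forall>j\<in>modified y. apply_op w x ! j = w ! j"
        using y x disjoint_opsD[OF d] nth_apply_op_unmodified by metis
      then show ?thesis
        using k y False parallel_nth_cong[of y "S - {x}" S k "apply_op w x" w] d d'
        by (simp add: nth_apply_parallel)
    qed
  next
    case False
    then show ?thesis
      using k nth_apply_op_unmodified[of k x w] x
      by (simp add: nth_apply_parallel parallel_nth_untouched)
  qed
qed simp

section \<open>Transformations are no shorter than parallel edits\<close>

text \<open>Operations meeting a region \<open>T\<close> on which \<open>w\<close> and \<open>w'\<close> may differ are traded for
  replacements at the positions of \<open>T\<close> that still need to change.\<close>

lemma parallel_edit_patch:
  assumes p: "parallel_edit w' S' v" and len: "length w = length w'"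
    and T: "finite T" "\<forall>k\<in>T. k < length w"
    and agree: "\<forall>k. k \<notin> T \<longrightarrow> w ! k = w' ! k"
    and closed: "\<forall>y\<in>S'. modified y \<inter> T = {} \<or> modified y \<subseteq> T"
  shows "\<exists>S. parallel_edit w S v \<and>
           card S \<le> card {y\<in>S'. modified y \<inter> T = {}} + card {k\<in>T. v ! k \<noteq> w ! k}"
proof -
  let ?A = "{y\<in>S'. modified y \<inter> T = {}}"
  let ?B = "{k\<in>T. v ! k \<noteq> w ! k}"
  let ?S = "?A \<union> Rep ` ?B"
  have fin: "finite S'" and d: "disjoint_ops S'" and ok: "\<forall>y\<in>S'. op_ok w' y"
    and r: "apply_parallel w' S' = v"
    using p unfolding parallel_edit_def by auto
  have agreeA: "\<forall>j\<in>modified y. w ! j = w' ! j" if "y \<in> ?A" for y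
    using that agree by blast
  have dS: "disjoint_ops ?S"
    using d unfolding disjoint_ops_def by fastforce
  have okS: "\<forall>y\<in>?S. op_ok w y"
    using ok agreeA op_ok_cong[OF len] T(2) by fastforce
  have "apply_parallel w ?S = v"
  proof (rule nth_equalityI)
    show "length (apply_parallel w ?S) = length v"
      using r len by auto
    fix k assume "k < length (apply_parallel w ?S)"
    then have k: "k < length w" by simp
    have vk: "v ! k = parallel_nth w' S' k"
      using r k len by (metis nth_apply_parallel)
    show "apply_parallel w ?S ! k = v ! k"
    proof (cases "k \<in> T")
      case kT: True
      show ?thesis
      proof (cases "v ! k = w ! k")
        case True
        then have "\<forall>y\<in>?S. k \<notin> modified y"
          using kT by auto
        then show ?thesis
          using True k by (simp add: nth_apply_parallel parallel_nth_untouched)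
      next
        case False
        then have "Rep k \<in> ?S"
          using kT by blast
        then show ?thesis
          using False k by (simp add: nth_apply_parallel parallel_nth_Rep)
      qed
    next
      case False
      show ?thesis
      proof (cases "\<exists>y\<in>S'. k \<in> modified y")
        case True
        then obtain y where y: "y \<in> S'" "k \<in> modified y" by blast
        then have "y \<in> ?A"
          using closed False by blast
        then have "parallel_nth w ?S k = parallel_nth w' S' k"
          using parallel_nth_cong[of y ?S S' k w w'] y dS d agreeA by blast
        then show ?thesis
          using vk k by (simp add: nth_apply_parallel)
      next
        case nc: False
        then have "\<forall>y\<in>?S. k \<notin> modified y"
          using False by auto
        then show ?thesis
          using vk k nc False agree
          by (simp add: nth_apply_parallel parallel_nth_untouched)
      qed
    qed
  qed
  then have "parallel_edit w ?S v"
    using fin T(1) dS okS unfolding parallel_edit_def by simp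
  moreover have "card ?S \<le> card ?A + card ?B"
    using card_Un_le[of ?A "Rep ` ?B"] card_image_le[of ?B Rep] T(1) by simp
  ultimately show ?thesis
    by blast
qed

lemma parallel_edit_insert:
  assumes okx: "op_ok w x" and p: "parallel_edit (apply_op w x) S' v"
    and apart: "\<forall>y\<in>S'. modified y \<inter> modified x = {}"
  shows "parallel_edit w (insert x S') v"
proof -
  let ?w = "apply_op w x"
  let ?S = "insert x S'"
  have fin: "finite S'" and d: "disjoint_ops S'" and ok: "\<forall>y\<in>S'. op_ok ?w y"
    and r: "apply_parallel ?w S' = v"
    using p unfolding parallel_edit_def by auto
  have agree: "\<forall>j\<in>modified y. w ! j = ?w ! j" if "y \<in> S'" for y
    using that apart nth_apply_op_unmodified by fastforce
  have dS: "disjoint_ops ?S"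
    using d apart unfolding disjoint_ops_def by blast
  have okS: "\<forall>y\<in>?S. op_ok w y"
    using okx ok agree op_ok_cong[of w ?w] by auto
  have "apply_parallel w ?S = v"
  proof (rule nth_equalityI)
    show "length (apply_parallel w ?S) = length v"
      using r by auto
    fix k assume "k < length (apply_parallel w ?S)"
    then have k: "k < length w" by simp
    have vk: "v ! k = parallel_nth ?w S' k"
      using r k by (metis length_apply_op nth_apply_parallel)
    show "apply_parallel w ?S ! k = v ! k"
    proof (cases "k \<in> modified x")
      case True
      then have "\<forall>y\<in>S'. k \<notin> modified y"
        using apart by blast
      then show ?thesis
        using vk k True parallel_nth_modified[OF _ dS okx True]
        by (simp add: nth_apply_parallel parallel_nth_untouched)
    next
      case kx: False
      show ?thesis
      proof (cases "\<exists>y\<in>S'. k \<in> modified y")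
        case True
        then obtain y where y: "y \<in> S'" "k \<in> modified y" by blast
        then have "parallel_nth w ?S k = parallel_nth ?w S' k"
          using parallel_nth_cong[of y ?S S' k w ?w] dS d agree by blast
        then show ?thesis
          using vk k by (simp add: nth_apply_parallel)
      next
        case False
        then have "\<forall>y\<in>?S. k \<notin> modified y"
          using kx by auto
        then show ?thesis
          using vk k False kx nth_apply_op_unmodified[of k x w]
          by (simp add: nth_apply_parallel parallel_nth_untouched)
      qed
    qed
  qed
  then show ?thesis
    using fin dS okS unfolding parallel_edit_def by blast
qed

lemma parallel_edit_step_inside:
  assumes okx: "op_ok w x" and p: "parallel_edit (apply_op w x) S' v"
    and y: "y \<in> S'" "modified x \<subseteq> modified y"
  shows "\<exists>S. parallel_edit w S v \<and> card S \<le> card S' + 1"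
proof -
  let ?w = "apply_op w x"
  let ?T = "modified y"
  have fin: "finite S'" and d: "disjoint_ops S'" and ok: "\<forall>z\<in>S'. op_ok ?w z"
    using p unfolding parallel_edit_def by auto
  have closed: "\<forall>z\<in>S'. modified z \<inter> ?T = {} \<or> modified z \<subseteq> ?T"
    using d y(1) unfolding disjoint_ops_def by (metis order_refl)
  have bounded: "\<forall>k\<in>?T. k < length w"
    using op_ok_modified_less[of ?w y] ok y(1) by simp
  have agree: "\<forall>k. k \<notin> ?T \<longrightarrow> w ! k = ?w ! k"
    using y(2) nth_apply_op_unmodified[of _ x w] by auto
  obtain S where S: "parallel_edit w S v"
    "card S \<le> card {z\<in>S'. modified z \<inter> ?T = {}} + card {k\<in>?T. v ! k \<noteq> w ! k}"
    using parallel_edit_patch[OF p length_apply_op[symmetric] finite_modified bounded agree closed] by blast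
  have "{z\<in>S'. modified z \<inter> ?T = {}} \<subset> S'"
    using y(1) modified_nonempty[of y] by blast
  then have "card {z\<in>S'. modified z \<inter> ?T = {}} < card S'"
    by (rule psubset_card_mono[OF fin])
  moreover have "card {k\<in>?T. v ! k \<noteq> w ! k} \<le> 2"
    using card_mono[of ?T "{k\<in>?T. v ! k \<noteq> w ! k}"] card_modified_le[of y] by auto
  ultimately show ?thesis
    using S by (intro exI[of _ S]) linarith
qed

lemma parallel_edit_step_swap:
  assumes okx: "op_ok w (Swp i)" and p: "parallel_edit (apply_op w (Swp i)) S' v"
    and nsw: "Swp i \<notin> S'" and touched: "\<exists>y\<in>S'. modified y \<inter> {i, Suc i} \<noteq> {}"
  shows "\<exists>S. parallel_edit w S v \<and> card S \<le> card S' + 1"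
proof -
  let ?w = "apply_op w (Swp i)"
  define I where "I = {y\<in>S'. modified y \<inter> {i, Suc i} \<noteq> {}}"
  define T where "T = {i, Suc i} \<union> \<Union>(modified ` I)"
  have fin: "finite S'" and d: "disjoint_ops S'" and ok: "\<forall>y\<in>S'. op_ok ?w y"
    and r: "apply_parallel ?w S' = v"
    using p unfolding parallel_edit_def by auto
  have si: "Suc i < length w" and ne: "w ! i \<noteq> w ! Suc i"
    using okx by auto
  have wi: "?w ! i = w ! Suc i" "?w ! Suc i = w ! i"
    using si by auto
  have fT: "finite T"
    using fin unfolding T_def I_def by simp
  have closed: "\<forall>z\<in>S'. modified z \<inter> T = {} \<or> modified z \<subseteq> T"
  proof
    fix z assume z: "z \<in> S'"
    show "modified z \<inter> T = {} \<or> modified z \<subseteq> T"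
    proof (cases "z \<in> I")
      case True
      then show ?thesis
        unfolding T_def by blast
    next
      case False
      have "modified z \<inter> modified y = {}" if "y \<in> I" for y
      proof -
        have "y \<in> S'" "y \<noteq> z"
          using that False unfolding I_def by auto
        then show ?thesis
          using d z unfolding disjoint_ops_def by auto
      qed
      then show ?thesis
        using False z unfolding T_def I_def by blast
    qed
  qed
  have bounded: "\<forall>k\<in>T. k < length w"
    using si ok op_ok_modified_less[of ?w] unfolding T_def I_def by fastforce
  have agree: "\<forall>k. k \<notin> T \<longrightarrow> w ! k = ?w ! k"
    using nth_apply_op_unmodified[of _ "Swp i" w] unfolding T_def by auto
  obtain S where S: "parallel_edit w S v"
    "card S \<le> card {z\<in>S'. modified z \<inter> T = {}} + card {k\<in>T. v ! k \<noteq> w ! k}"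
    using parallel_edit_patch[OF p length_apply_op[symmetric] fT bounded agree closed] by blast
  have "{z\<in>S'. modified z \<inter> T = {}} \<subset> S'"
    using touched unfolding T_def by auto
  then have "card {z\<in>S'. modified z \<inter> T = {}} < card S'"
    by (rule psubset_card_mono[OF fin])
  txt \<open>Left of the swap, a mismatch with \<open>v\<close> can only sit at \<open>i - 1\<close> (if \<open>Swp (i - 1)\<close> acts)
    or at \<open>i\<close> (otherwise); symmetrically on the right.\<close>
  moreover have "card {k\<in>T. v ! k \<noteq> w ! k} \<le> 2"
  proof -
    define a1 where "a1 = (if 0 < i \<and> Swp (i - 1) \<in> S' then i - 1 else i)"
    define a2 where "a2 = (if Swp (Suc i) \<in> S' then Suc (Suc i) else Suc i)"
    have vi: "v ! i = w ! i" if h: "0 < i" "Swp (i - 1) \<in> S'"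
    proof -
      have s1: "Suc (i - 1) = i" using h by simp
      have "v ! i = ?w ! (i - 1)"
        using r si parallel_nth_Swp(2)[OF h(2) d, of ?w] s1 by (metis Suc_lessD length_apply_op nth_apply_parallel)
      moreover have "?w ! (i - 1) \<noteq> ?w ! i"
        using ok h s1 by (metis op_ok.simps(2))
      ultimately show ?thesis
        using wi ne nth_apply_op_unmodified[of "i - 1" "Swp i" w] h by auto
    qed
    have vsi: "v ! Suc i = w ! Suc i" if h: "Swp (Suc i) \<in> S'"
    proof -
      have "v ! Suc i = ?w ! Suc (Suc i)"
        using r si parallel_nth_Swp(1)[OF h d, of ?w] by (metis length_apply_op nth_apply_parallel)
      moreover have "?w ! Suc i \<noteq> ?w ! Suc (Suc i)"
        using ok h by (metis op_ok.simps(2))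
      ultimately show ?thesis
        using wi ne nth_apply_op_unmodified[of "Suc (Suc i)" "Swp i" w] by auto
    qed
    have "{k\<in>T. v ! k \<noteq> w ! k} \<subseteq> {a1, a2}"
    proof
      fix k assume k: "k \<in> {k\<in>T. v ! k \<noteq> w ! k}"
      show "k \<in> {a1, a2}"
      proof (cases "k = i \<or> k = Suc i")
        case True
        then show ?thesis
          using k vi vsi unfolding a1_def a2_def by auto
      next
        case False
        then obtain y where y: "y \<in> S'" "k \<in> modified y" "modified y \<inter> {i, Suc i} \<noteq> {}"
          using k unfolding T_def I_def by blast
        then obtain j where "y = Swp j"
          using False by (cases y) auto
        then show ?thesis
          using y nsw False unfolding a1_def a2_def by auto
      qed
    qed
    then have "card {k\<in>T. v ! k \<noteq> w ! k} \<le> card {a1, a2}"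
      by (rule card_mono[rotated]) simp
    also have "\<dots> \<le> 2"
      by (simp add: card_insert_if)
    finally show ?thesis .
  qed
  ultimately show ?thesis
    using S by (intro exI[of _ S]) linarith
qed

lemma parallel_edit_step:
  assumes okx: "op_ok w x" and p: "parallel_edit (apply_op w x) S' v"
  shows "\<exists>S. parallel_edit w S v \<and> card S \<le> card S' + 1"
proof (cases "\<exists>y\<in>S'. modified y \<inter> modified x \<noteq> {}")
  case False
  then have "parallel_edit w (insert x S') v"
    using parallel_edit_insert[OF okx p] by blast
  moreover have "card (insert x S') \<le> card S' + 1"
    using p unfolding parallel_edit_def by (simp add: card_insert_if)
  ultimately show ?thesis
    by blast
next
  case True
  then obtain y where y: "y \<in> S'" "modified y \<inter> modified x \<noteq> {}"
    by blast
  show ?thesis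
  proof (cases "modified x \<subseteq> modified y")
    case True
    then show ?thesis
      using parallel_edit_step_inside[OF okx p y(1)] by blast
  next
    case False
    obtain i where x: "x = Swp i"
      using y False by (cases x) auto
    have "Swp i \<notin> S'"
    proof
      assume "Swp i \<in> S'"
      moreover obtain k where "k \<in> modified y" "k \<in> modified x"
        using y(2) by blast
      ultimately have "y = x"
        using p y(1) disjoint_opsD[of S' y x k] x unfolding parallel_edit_def by blast
      then show False
        using False by blast
    qed
    moreover have "\<exists>y\<in>S'. modified y \<inter> {i, Suc i} \<noteq> {}"
      using y x by auto
    ultimately show ?thesis
      using parallel_edit_step_swap okx p x by blast
  qed
qed

lemma parallel_edit_of_transforms:
  "transforms w os v \<Longrightarrow> \<exists>S. parallel_edit w S v \<and> card S \<le> length os"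
proof (induction os arbitrary: w)
  case Nil
  then have "parallel_edit w {} v"
    unfolding transforms_def parallel_edit_def disjoint_ops_def by simp
  then show ?case
    by force
next
  case (Cons x os)
  have "run (apply_op w x) os \<noteq> []"
    by (cases os) auto
  then have ok: "op_ok w x" and t: "transforms (apply_op w x) os v"
    using Cons.prems unfolding transforms_def by (auto simp: last_ConsR)
  obtain S' where "parallel_edit (apply_op w x) S' v" "card S' \<le> length os"
    using Cons.IH[OF t] by blast
  then show ?case
    using parallel_edit_step[OF ok] by fastforce
qed

section \<open>Minimal parallel edits\<close>

lemma parallel_edit_mismatches:
  assumes "length v = length u"
  shows "parallel_edit u (Rep ` {k. k < length u \<and> u ! k \<noteq> v ! k}) v"
proof -
  let ?S = "Rep ` {k. k < length u \<and> u ! k \<noteq> v ! k}"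
  have "apply_parallel u ?S = v"
  proof (rule nth_equalityI)
    fix k assume "k < length (apply_parallel u ?S)"
    then have k: "k < length u" by simp
    show "apply_parallel u ?S ! k = v ! k"
    proof (cases "u ! k = v ! k")
      case True
      then have "\<forall>y\<in>?S. k \<notin> modified y"
        by auto
      then show ?thesis
        using k True by (simp add: nth_apply_parallel parallel_nth_untouched)
    next
      case False
      then have "Rep k \<in> ?S"
        using k by blast
      then show ?thesis
        using k False by (simp add: nth_apply_parallel parallel_nth_Rep)
    qed
  qed (use assms in simp)
  then show ?thesis
    unfolding parallel_edit_def disjoint_ops_def by auto
qed

definition no_mergeable_reps :: "bool list \<Rightarrow> edit_op set \<Rightarrow> bool" where
  "no_mergeable_reps u S \<longleftrightarrow> (\<forall>i. Rep i \<in> S \<and> Rep (Suc i) \<in> S \<longrightarrow> u ! i = u ! Suc i)"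

lemma parallel_edit_merge_reps:
  assumes p: "parallel_edit u S v" and r: "Rep i \<in> S" "Rep (Suc i) \<in> S"
    and ne: "u ! i \<noteq> u ! Suc i"
  shows "parallel_edit u (insert (Swp i) (S - {Rep i, Rep (Suc i)})) v"
proof -
  let ?R = "S - {Rep i, Rep (Suc i)}"
  let ?S = "insert (Swp i) ?R"
  have fin: "finite S" and d: "disjoint_ops S" and ok: "\<forall>x\<in>S. op_ok u x"
    and res: "apply_parallel u S = v"
    using p unfolding parallel_edit_def by auto
  have si: "Suc i < length u"
    using ok r(2) by auto
  have apart: "i \<notin> modified y \<and> Suc i \<notin> modified y" if "y \<in> ?R" for y
    using that r disjoint_opsD[OF d, of y "Rep i" i] disjoint_opsD[OF d, of y "Rep (Suc i)" "Suc i"]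
    by auto
  have dS: "disjoint_ops ?S"
    using d apart unfolding disjoint_ops_def by fastforce
  have "apply_parallel u ?S = v"
  proof (rule nth_equalityI)
    fix k assume "k < length (apply_parallel u ?S)"
    then have k: "k < length u" by simp
    have vk: "v ! k = parallel_nth u S k"
      using res k by (metis nth_apply_parallel)
    show "apply_parallel u ?S ! k = v ! k"
    proof (cases "k = i \<or> k = Suc i")
      case True
      then show ?thesis
        using vk k ne parallel_nth_Swp[OF _ dS] parallel_nth_Rep[OF r(1)] parallel_nth_Rep[OF r(2)]
        by (auto simp: nth_apply_parallel)
    next
      case False
      show ?thesis
      proof (cases "\<exists>y\<in>S. k \<in> modified y")
        case True
        then obtain y where y: "y \<in> S" "k \<in> modified y" by blast
        then have "y \<in> ?S"
          using False by auto
        then have "parallel_nth u ?S k = parallel_nth u S k"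
          using parallel_nth_cong[of y ?S S k u u] y dS d by blast
        then show ?thesis
          using vk k by (simp add: nth_apply_parallel)
      next
        case nc: False
        then have "\<forall>y\<in>?S. k \<notin> modified y"
          using False by auto
        then show ?thesis
          using vk k nc by (simp add: nth_apply_parallel parallel_nth_untouched)
      qed
    qed
  qed (metis res length_apply_parallel)
  then show ?thesis
    using fin dS ok si ne unfolding parallel_edit_def by auto
qed

lemma card_merge_reps_less:
  assumes "finite S" "Rep i \<in> S" "Rep (Suc i) \<in> S"
  shows "card (insert (Swp i) (S - {Rep i, Rep (Suc i)})) < card S"
proof -
  have "card (S - {Rep i, Rep (Suc i)}) = card S - 2"
    using assms by (simp add: card_Diff_subset)
  moreover have "2 \<le> card S"
    using assms card_mono[of S "{Rep i, Rep (Suc i)}"] by simp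
  moreover have "card (insert (Swp i) (S - {Rep i, Rep (Suc i)})) \<le> Suc (card (S - {Rep i, Rep (Suc i)}))"
    using assms(1) by (simp add: card_insert_if)
  ultimately show ?thesis
    by linarith
qed

lemma minimal_parallel_edit_exists:
  assumes "length v = length u"
  obtains S where "parallel_edit u S v" "\<And>S'. parallel_edit u S' v \<Longrightarrow> card S \<le> card S'"
  using ex_has_least_nat[of "\<lambda>S. parallel_edit u S v", OF parallel_edit_mismatches[OF assms]]
  by blast

lemma minimal_parallel_edit_no_mergeable_reps:
  assumes p: "parallel_edit u S v" and min: "\<And>S'. parallel_edit u S' v \<Longrightarrow> card S \<le> card S'"
  shows "no_mergeable_reps u S"
  unfolding no_mergeable_reps_def
proof (intro allI impI)
  fix i assume r: "Rep i \<in> S \<and> Rep (Suc i) \<in> S"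
  show "u ! i = u ! Suc i"
  proof (rule ccontr)
    assume "u ! i \<noteq> u ! Suc i"
    then have "parallel_edit u (insert (Swp i) (S - {Rep i, Rep (Suc i)})) v"
      using parallel_edit_merge_reps p r by blast
    then have "card S \<le> card (insert (Swp i) (S - {Rep i, Rep (Suc i)}))"
      by (rule min)
    moreover have "card (insert (Swp i) (S - {Rep i, Rep (Suc i)})) < card S"
      using card_merge_reps_less p r unfolding parallel_edit_def by blast
    ultimately show False
      by simp
  qed
qed

lemma dist_tilde_le: "transforms u os v \<Longrightarrow> dist_tilde u v \<le> length os"
  unfolding dist_tilde_def by (rule Least_le) blast

lemma dist_tilde_attained:
  "transforms u os v \<Longrightarrow> \<exists>os'. transforms u os' v \<and> length os' = dist_tilde u v"
  unfolding dist_tilde_def by (rule LeastI[of "\<lambda>k. \<exists>os. transforms u os v \<and> length os = k"]) blast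

lemma minimal_transformation_of_minimal_parallel_edit:
  assumes p: "parallel_edit u S v" and min: "\<And>S'. parallel_edit u S' v \<Longrightarrow> card S \<le> card S'"
    and os: "set os = S" "distinct os" "transforms u os v"
  shows "minimal_transformation u os v"
proof -
  have len: "length os = card S"
    using distinct_card[OF os(2)] os(1) by simp
  have "dist_tilde u v = card S"
  proof (rule antisym)
    show "dist_tilde u v \<le> card S"
      using dist_tilde_le[OF os(3)] len by simp
  next
    obtain os' where os': "transforms u os' v" "length os' = dist_tilde u v"
      using dist_tilde_attained[OF os(3)] by blast
    then obtain S' where "parallel_edit u S' v" "card S' \<le> dist_tilde u v"
      using parallel_edit_of_transforms by fastforce
    then show "card S \<le> dist_tilde u v"
      using min by fastforce
  qed
  moreover have "modified (os ! i) \<inter> modified (os ! j) = {}" if "i < j" "j < length os" for i j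
  proof -
    have "os ! i \<noteq> os ! j"
      using that os(2) by (simp add: nth_eq_iff_index_eq)
    moreover have "os ! i \<in> S" "os ! j \<in> S"
      using that os(1) by auto
    ultimately show ?thesis
      using p unfolding parallel_edit_def disjoint_ops_def by blast
  qed
  ultimately show ?thesis
    unfolding minimal_transformation_def using os(3) len by simp
qed

section \<open>Ordering a parallel edit\<close>

definition safe_step_property :: "bool list \<Rightarrow> bool" where
  "safe_step_property f \<longleftrightarrow>
     (\<forall>u S. finite S \<and> S \<noteq> {} \<and> disjoint_ops S \<and> (\<forall>x\<in>S. op_ok u x) \<and> no_mergeable_reps u S \<and>
        f_free f u \<and> f_free f (apply_parallel u S) \<longrightarrow> (\<exists>x\<in>S. f_free f (apply_op u x)))"

lemma f_free_ordering:
  assumes "safe_step_property f"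
  shows "finite S \<Longrightarrow> disjoint_ops S \<Longrightarrow> \<forall>x\<in>S. op_ok u x \<Longrightarrow> no_mergeable_reps u S \<Longrightarrow>
    f_free f u \<Longrightarrow> f_free f (apply_parallel u S) \<Longrightarrow>
    \<exists>os. set os = S \<and> distinct os \<and> transforms u os (apply_parallel u S) \<and> f_free_transformation f u os"
proof (induction "card S" arbitrary: S u rule: less_induct)
  case less
  note fin = less.prems(1) and d = less.prems(2) and ok = less.prems(3) and nm = less.prems(4)
    and fu = less.prems(5) and fv = less.prems(6)
  show ?case
  proof (cases "S = {}")
    case True
    then show ?thesis
      using fu unfolding transforms_def f_free_transformation_def by (intro exI[of _ "[]"]) simp
  next
    case False
    then obtain x where x: "x \<in> S" "f_free f (apply_op u x)"
      using assms less.prems unfolding safe_step_property_def by blast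
    let ?u = "apply_op u x"
    let ?S = "S - {x}"
    have res: "apply_parallel ?u ?S = apply_parallel u S"
      by (rule apply_parallel_remove[OF x(1) d ok])
    have okx: "op_ok u x"
      using ok x(1) by blast
    have unchanged: "?u ! j = u ! j" if "y \<in> ?S" "j \<in> modified y" for y j
      using that x(1) disjoint_opsD[OF d] nth_apply_op_unmodified by blast
    have ok': "\<forall>y\<in>?S. op_ok ?u y"
      using ok unchanged op_ok_cong[of ?u u] by (metis DiffD1 length_apply_op)
    have nm': "no_mergeable_reps ?u ?S"
      using nm unchanged unfolding no_mergeable_reps_def
      by (metis DiffD1 insertI1 lessI modified.simps(1))
    obtain os where os: "set os = ?S" "distinct os" "transforms ?u os (apply_parallel u S)"
      "f_free_transformation f ?u os"
      using less.hyps[of ?S ?u] card_Diff1_less[OF fin x(1)] fin d ok' nm' x(2) fv res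
        disjoint_ops_subset[OF d] by fastforce
    have "transforms u (x # os) (apply_parallel u S)"
      using os(3) okx unfolding transforms_def
      by (cases os) (simp_all add: last_ConsR)
    moreover have "f_free_transformation f u (x # os)"
      using os(4) fu unfolding f_free_transformation_def by simp
    ultimately show ?thesis
      using os(1,2) x(1) by (intro exI[of _ "x # os"]) auto
  qed
qed

theorem tilde_isometric_if_safe_step_property:
  assumes "safe_step_property f"
  shows "tilde_isometric f"
  unfolding tilde_isometric_def
proof (intro allI impI)
  fix m u v
  assume "length u = m \<and> length v = m \<and> f_free f u \<and> f_free f v"
  then have len: "length v = length u" and fu: "f_free f u" and fv: "f_free f v"
    by auto
  obtain S where p: "parallel_edit u S v" and min: "\<And>S'. parallel_edit u S' v \<Longrightarrow> card S \<le> card S'"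
    using minimal_parallel_edit_exists[OF len] by blast
  then have nm: "no_mergeable_reps u S"
    by (rule minimal_parallel_edit_no_mergeable_reps)
  obtain os where os: "set os = S" "distinct os" "transforms u os v" "f_free_transformation f u os"
    using f_free_ordering[OF assms, of S u] p nm fu fv unfolding parallel_edit_def by auto
  then show "\<exists>os. minimal_transformation u os v \<and> f_free_transformation f u os"
    using minimal_transformation_of_minimal_parallel_edit[OF p min] by blast
qed

section \<open>The word 111000\<close>

abbreviation f111000 :: "bool list" where
  "f111000 \<equiv> [True, True, True, False, False, False]"

lemma occurs_at_111000:
  "occurs_at f111000 g s \<longleftrightarrow> g s \<and> g (s + 1) \<and> g (s + 2) \<and> \<not> g (s + 3) \<and> \<not> g (s + 4) \<and> \<not> g (s + 5)"
  unfolding occurs_at_def by (simp add: numeral_eq_Suc All_less_Suc2 add_Suc_right)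

lemma window_core:
  fixes u v :: "nat \<Rightarrow> bool" and sw1 sw2 :: bool and q a b c :: nat
  assumes agree: "\<And>j. j < q \<Longrightarrow> j \<noteq> 6 \<Longrightarrow> \<not> (sw1 \<and> j = 7) \<Longrightarrow> v j = u j"
    and op1: "if sw1 then u 6 \<noteq> u 7 \<and> v 6 = u 7 \<and> v 7 = u 6 else v 6 \<noteq> u 6"
    and gap: "(if sw1 then 7 else 6) < q"
    and op2: "if sw2 then u q \<noteq> u (q + 1) \<and> v q = u (q + 1) \<and> v (q + 1) = u q else v q \<noteq> u q"
    and unmerged: "\<not> sw1 \<and> \<not> sw2 \<and> q = 7 \<longrightarrow> u 6 = u 7"
    and A: "a \<le> (if sw1 then 7 else 6)" "q \<le> a + 5"
      "occurs_at f111000 (\<lambda>j. if j = 6 \<or> sw1 \<and> j = 7 then v j else u j) a"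
    and B: "b \<le> (if sw1 then 7 else 6)" "q \<le> b + 5"
      "occurs_at f111000 (\<lambda>j. if j = 6 \<or> sw1 \<and> j = 7 then u j else v j) b"
    and C: "c \<le> (if sw2 then q + 1 else q)" "q \<le> c + 5"
      "occurs_at f111000 (\<lambda>j. if j = q \<or> sw2 \<and> j = q + 1 then v j else u j) c"
  shows False
proof -
  have q: "q = 7 \<or> q = 8 \<or> q = 9 \<or> q = 10 \<or> q = 11 \<or> q = 12"
    using gap A(1,2) by (cases sw1) (simp_all, arith+)
  have a: "a = 2 \<or> a = 3 \<or> a = 4 \<or> a = 5 \<or> a = 6 \<or> a = 7"
    using gap A(1,2) by (cases sw1) (simp_all, arith+)
  have b: "b = 2 \<or> b = 3 \<or> b = 4 \<or> b = 5 \<or> b = 6 \<or> b = 7"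
    using gap B(1,2) by (cases sw1) (simp_all, arith+)
  have c: "c \<in> set [q - 5..<Suc (if sw2 then q + 1 else q)]"
    using C(1,2) by auto
  txt \<open>Exhaustive check over the kinds of both operations and the offsets \<open>q\<close>, \<open>a\<close>, \<open>b\<close>;
    the offset \<open>c\<close> is split only where the occurrences at \<open>a\<close> and \<open>b\<close> are compatible, which
    happens for just two configurations.\<close>
  show False
    by (insert q a b, cases sw1; cases sw2; elim disjE; (insert gap A(1,2) B(1,2), simp; fail)?;
        insert op1 op2 unmerged A(3) B(3) c C(3), unfold occurs_at_111000,
        simp add: agree, (elim disjE; simp add: agree)?, (blast)?)
qed

lemma window_contradiction:
  fixes u v :: "nat \<Rightarrow> bool" and sw1 sw2 :: bool and p q a b c :: nat
  assumes agree: "\<And>j. j < q \<Longrightarrow> j \<noteq> p \<Longrightarrow> \<not> (sw1 \<and> j = p + 1) \<Longrightarrow> v j = u j"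
    and op1: "if sw1 then u p \<noteq> u (p + 1) \<and> v p = u (p + 1) \<and> v (p + 1) = u p else v p \<noteq> u p"
    and gap: "(if sw1 then p + 1 else p) < q"
    and op2: "if sw2 then u q \<noteq> u (q + 1) \<and> v q = u (q + 1) \<and> v (q + 1) = u q else v q \<noteq> u q"
    and unmerged: "\<not> sw1 \<and> \<not> sw2 \<and> q = p + 1 \<longrightarrow> u p = u (p + 1)"
    and A: "a \<le> (if sw1 then p + 1 else p)" "q \<le> a + 5"
      "occurs_at f111000 (\<lambda>j. if j = p \<or> sw1 \<and> j = p + 1 then v j else u j) a"
    and B: "b \<le> (if sw1 then p + 1 else p)" "q \<le> b + 5"
      "occurs_at f111000 (\<lambda>j. if j = p \<or> sw1 \<and> j = p + 1 then u j else v j) b"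
    and C: "c \<le> (if sw2 then q + 1 else q)" "q \<le> c + 5"
      "occurs_at f111000 (\<lambda>j. if j = q \<or> sw2 \<and> j = q + 1 then v j else u j) c"
  shows False
proof -
  txt \<open>Move the first operation to position 6, padding with \<open>False\<close> on the left.\<close>
  define shift where "shift w k = (if k + p < 6 then False else w (k + p - 6))" for w :: "nat \<Rightarrow> bool" and k
  have shift: "shift w (j + 6 - p) = w j" if "p \<le> j + 6" for w j
    using that unfolding shift_def by simp
  have pq: "p < q"
    using gap by (auto split: if_splits)
  have window: "p \<le> a + 6" "p \<le> b + 6" "p \<le> c + 6"
    using A(2) B(2) C(2) pq by auto
  have same: "j + 6 - p = k + 6 - p \<longleftrightarrow> j = k" if "p \<le> j + 6" "p \<le> k + 6" for j k
    using that by auto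
  have move: "occurs_at f111000
      (\<lambda>k. if k = r + 6 - p \<or> sw \<and> k = r + 6 - p + 1 then shift w1 k else shift w2 k) (s + 6 - p)"
    if occ: "occurs_at f111000 (\<lambda>j. if j = r \<or> sw \<and> j = r + 1 then w1 j else w2 j) s"
      and "p \<le> s + 6" "p \<le> r" for r s sw w1 w2
  proof (subst occurs_at_shift[where g = "\<lambda>j. if j = r \<or> sw \<and> j = r + 1 then w1 j else w2 j" and s = s])
    fix i
    have idx: "s + 6 - p + i = (s + i) + 6 - p"
      and "(s + i) + 6 - p = r + 6 - p \<longleftrightarrow> s + i = r"
      and "(s + i) + 6 - p = r + 6 - p + 1 \<longleftrightarrow> s + i = r + 1"
      using that(2,3) by auto
    then show "(\<lambda>k. if k = r + 6 - p \<or> sw \<and> k = r + 6 - p + 1 then shift w1 k else shift w2 k) (s + 6 - p + i) =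
        (\<lambda>j. if j = r \<or> sw \<and> j = r + 1 then w1 j else w2 j) (s + i)"
      using shift[of "s + i" w1] shift[of "s + i" w2] that(2) by (simp only: idx)
  qed (rule occ)
  show False
  proof (rule window_core[of "q + 6 - p" sw1 "shift v" "shift u" sw2 "a + 6 - p" "b + 6 - p" "c + 6 - p"])
    show "shift v j = shift u j"
      if j: "j < q + 6 - p" "j \<noteq> 6" "\<not> (sw1 \<and> j = 7)" for j
    proof (cases "j + p < 6")
      case False
      then have "j + p - 6 < q" "j + p - 6 \<noteq> p" "\<not> (sw1 \<and> j + p - 6 = p + 1)"
        using j pq by auto
      then show ?thesis
        using agree False unfolding shift_def by simp
    qed (simp add: shift_def)
    show "if sw1 then shift u 6 \<noteq> shift u 7 \<and> shift v 6 = shift u 7 \<and> shift v 7 = shift u 6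
          else shift v 6 \<noteq> shift u 6"
      using op1 shift[of p] shift[of "p + 1"] by (cases sw1) simp_all
    show "(if sw1 then 7 else 6) < q + 6 - p"
      using gap by auto
    show "if sw2 then shift u (q + 6 - p) \<noteq> shift u (q + 6 - p + 1) \<and>
            shift v (q + 6 - p) = shift u (q + 6 - p + 1) \<and> shift v (q + 6 - p + 1) = shift u (q + 6 - p)
          else shift v (q + 6 - p) \<noteq> shift u (q + 6 - p)"
    proof -
      have "shift w (Suc (q + 6 - p)) = w (Suc q)" for w
        using pq unfolding shift_def by simp
      then show ?thesis
        using op2 pq shift[of q] by (cases sw2) simp_all
    qed
    show "\<not> sw1 \<and> \<not> sw2 \<and> q + 6 - p = 7 \<longrightarrow> shift u 6 = shift u 7"
      using unmerged pq unfolding shift_def by (auto simp: add.commute)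
    show "a + 6 - p \<le> (if sw1 then 7 else 6)" "q + 6 - p \<le> a + 6 - p + 5"
      "b + 6 - p \<le> (if sw1 then 7 else 6)" "q + 6 - p \<le> b + 6 - p + 5"
      "c + 6 - p \<le> (if sw2 then q + 6 - p + 1 else q + 6 - p)" "q + 6 - p \<le> c + 6 - p + 5"
      using A(1,2) B(1,2) C(1,2) pq by (auto split: if_splits)
    show "occurs_at f111000 (\<lambda>j. if j = 6 \<or> sw1 \<and> j = 7 then shift v j else shift u j) (a + 6 - p)"
      using move[OF A(3) window(1) order_refl] by simp
    show "occurs_at f111000 (\<lambda>j. if j = 6 \<or> sw1 \<and> j = 7 then shift u j else shift v j) (b + 6 - p)"
      using move[OF B(3) window(2) order_refl] by simp
    show "occurs_at f111000 (\<lambda>j. if j = q + 6 - p \<or> sw2 \<and> j = q + 6 - p + 1 then shift v j else shift u j)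
        (c + 6 - p)"
      using move[OF C(3) window(3)] pq by simp
  qed
qed

lemma leftmost_ops_not_all_unsafe:
  assumes d: "disjoint_ops S" and ok: "\<forall>x\<in>S. op_ok u x" and nm: "no_mergeable_reps u S"
    and fu: "f_free f111000 u" and fv: "f_free f111000 (apply_parallel u S)"
    and o1: "o1 \<in> S" "\<forall>y\<in>S. op_pos o1 \<le> op_pos y"
    and o2: "o2 \<in> S - {o1}" "\<forall>y\<in>S - {o1}. op_pos o2 \<le> op_pos y"
    and A: "\<not> f_free f111000 (apply_op u o1)"
    and B: "\<not> f_free f111000 (apply_parallel u (S - {o1}))"
    and C: "\<not> f_free f111000 (apply_op u o2)"
  shows False
proof -
  define v where "v = apply_parallel u S"
  define p where "p = op_pos o1"
  define q where "q = op_pos o2"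
  define sw1 where "sw1 = is_swap o1"
  define sw2 where "sw2 = is_swap o2"
  have o2S: "o2 \<in> S" "o2 \<noteq> o1"
    using o2(1) by auto
  have ok1: "op_ok u o1" and ok2: "op_ok u o2"
    using ok o1(1) o2S by auto
  have mod1: "j \<in> modified o1 \<longleftrightarrow> j = p \<or> sw1 \<and> j = p + 1" for j
    unfolding p_def sw1_def by (rule modified_iff)
  have mod2: "j \<in> modified o2 \<longleftrightarrow> j = q \<or> sw2 \<and> j = q + 1" for j
    unfolding q_def sw2_def by (rule modified_iff)
  have len: "length v = length u"
    unfolding v_def by simp
  have ql: "q < length u"
    using op_ok_modified_less[OF ok2] mod2 by blast
  have gap: "(if sw1 then p + 1 else p) < q"
  proof -
    have "p \<le> q"
      using o1(2) o2S(1) unfolding p_def q_def by simp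
    moreover have "q \<notin> modified o1"
    proof
      assume "q \<in> modified o1"
      moreover have "q \<in> modified o2"
        using mod2 by simp
      ultimately show False
        using disjoint_opsD[OF d o1(1) o2S(1)] o2S(2) by blast
    qed
    ultimately show ?thesis
      using mod1[of q] by (cases sw1) auto
  qed
  txt \<open>Every operation other than \<open>o1\<close> acts at or after position \<open>q\<close>.\<close>
  have agree: "v ! j = u ! j" if "j < q" "j \<notin> modified o1" for j
  proof -
    have "j \<notin> modified y" if "y \<in> S" for y
    proof (cases "y = o1")
      case False
      then have "q \<le> op_pos y"
        using o2(2) that unfolding q_def by blast
      then show ?thesis
        using \<open>j < q\<close> modified_iff[of j y] by auto
    qed (use \<open>j \<notin> modified o1\<close> in simp)
    then show ?thesis
      using that ql unfolding v_def by (simp add: nth_apply_parallel parallel_nth_untouched)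
  qed
  have op1: "if sw1 then u ! p \<noteq> u ! (p + 1) \<and> v ! p = u ! (p + 1) \<and> v ! (p + 1) = u ! p
             else v ! p \<noteq> u ! p"
    using o1(1) ok1 d op_ok_modified_less[OF ok1, of p] mod1
    unfolding v_def sw1_def p_def
    by (cases o1) (auto simp: nth_apply_parallel parallel_nth_Rep parallel_nth_Swp)
  have op2: "if sw2 then u ! q \<noteq> u ! (q + 1) \<and> v ! q = u ! (q + 1) \<and> v ! (q + 1) = u ! q
             else v ! q \<noteq> u ! q"
    using o2S(1) ok2 d ql unfolding v_def sw2_def q_def
    by (cases o2) (auto simp: nth_apply_parallel parallel_nth_Rep parallel_nth_Swp)
  have unmerged: "\<not> sw1 \<and> \<not> sw2 \<and> q = p + 1 \<longrightarrow> u ! p = u ! (p + 1)"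
  proof
    assume h: "\<not> sw1 \<and> \<not> sw2 \<and> q = p + 1"
    then have "o1 = Rep p" "o2 = Rep (Suc p)"
      unfolding sw1_def sw2_def p_def q_def by (cases o1; cases o2; simp)+
    then show "u ! p = u ! (p + 1)"
      using nm o1(1) o2S(1) unfolding no_mergeable_reps_def by auto
  qed
  define e1 where "e1 = (if sw1 then p + 1 else p)"
  define e2 where "e2 = (if sw2 then q + 1 else q)"
  have in1: "p \<le> j \<and> j \<le> e1" if "j \<in> modified o1" for j
    using that mod1 unfolding e1_def by auto
  have in2: "q \<le> j \<and> j \<le> e2" if "j \<in> modified o2" for j
    using that mod2 unfolding e2_def by auto
  have before_q: "u ! j = v ! j" if "j < q" "j \<notin> modified o1" for j
    using agree[OF that] by simp
  obtain a where "a + length f111000 \<le> length (apply_op u o1)"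
    and a2: "occurs_at f111000 ((!) (apply_op u o1)) a"
    using A unfolding f_free_iff_no_occurrence by blast
  then have a: "a + 6 \<le> length u" "occurs_at f111000 ((!) (apply_op u o1)) a"
    by simp_all
  have WA: "apply_op u o1 ! j = (if j \<in> modified o1 then v ! j else u ! j)" if "j < length u" for j
    using nth_apply_op_member[OF o1(1) d ok1 that] unfolding v_def by simp
  obtain j where "j \<in> modified o1" "a \<le> j" "j < a + length f111000"
  proof (rule occurrence_meets_difference[OF fu _ a(2)])
    show "a + length f111000 \<le> length u"
      using a(1) by simp
    show "apply_op u o1 ! j = u ! j" if "j < length u" "j \<notin> modified o1" for j
      using WA[OF that(1)] that(2) by simp
  qed
  then have a1: "a \<le> e1"
    using in1 by (meson order_trans)
  obtain j where "j \<in> {j. q \<le> j}" "a \<le> j" "j < a + length f111000"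
  proof (rule occurrence_meets_difference[OF fv _ a(2)])
    show "a + length f111000 \<le> length (apply_parallel u S)"
      using a(1) by simp
    show "apply_op u o1 ! j = apply_parallel u S ! j"
      if "j < length (apply_parallel u S)" "j \<notin> {j. q \<le> j}" for j
      using WA[of j] that before_q[of j] unfolding v_def by auto
  qed
  then have a2: "q \<le> a + 5"
    by simp
  have a3: "occurs_at f111000 (\<lambda>j. if j = p \<or> sw1 \<and> j = p + 1 then v ! j else u ! j) a"
  proof (subst occurs_at_shift[where g = "(!) (apply_op u o1)" and s = a])
    show "(if a + i = p \<or> sw1 \<and> a + i = p + 1 then v ! (a + i) else u ! (a + i)) = apply_op u o1 ! (a + i)"
      if "i < length f111000" for i
      using WA[of "a + i"] that a(1) mod1[of "a + i"] by simp
  qed (rule a(2))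
  obtain b where "b + length f111000 \<le> length (apply_parallel u (S - {o1}))"
    and b0: "occurs_at f111000 ((!) (apply_parallel u (S - {o1}))) b"
    using B unfolding f_free_iff_no_occurrence by blast
  then have b: "b + 6 \<le> length u" "occurs_at f111000 ((!) (apply_parallel u (S - {o1}))) b"
    by simp_all
  have WB: "apply_parallel u (S - {o1}) ! j = (if j \<in> modified o1 then u ! j else v ! j)"
    if "j < length u" for j
    using nth_apply_parallel_remove[OF o1(1) d that] unfolding v_def by simp
  obtain j where "j \<in> modified o1" "b \<le> j" "j < b + length f111000"
  proof (rule occurrence_meets_difference[OF fv _ b(2)])
    show "b + length f111000 \<le> length (apply_parallel u S)"
      using b(1) by simp
    show "apply_parallel u (S - {o1}) ! j = apply_parallel u S ! j"
      if "j < length (apply_parallel u S)" "j \<notin> modified o1" for j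
      using WB[of j] that unfolding v_def by simp
  qed
  then have b1: "b \<le> e1"
    using in1 by (meson order_trans)
  obtain j where "j \<in> {j. q \<le> j}" "b \<le> j" "j < b + length f111000"
  proof (rule occurrence_meets_difference[OF fu _ b(2)])
    show "b + length f111000 \<le> length u"
      using b(1) by simp
    show "apply_parallel u (S - {o1}) ! j = u ! j" if "j < length u" "j \<notin> {j. q \<le> j}" for j
      using WB[of j] that before_q[of j] by auto
  qed
  then have b2: "q \<le> b + 5"
    by simp
  have b3: "occurs_at f111000 (\<lambda>j. if j = p \<or> sw1 \<and> j = p + 1 then u ! j else v ! j) b"
  proof (subst occurs_at_shift[where g = "(!) (apply_parallel u (S - {o1}))" and s = b])
    show "(if b + i = p \<or> sw1 \<and> b + i = p + 1 then u ! (b + i) else v ! (b + i)) =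
        apply_parallel u (S - {o1}) ! (b + i)"
      if "i < length f111000" for i
      using WB[of "b + i"] that b(1) mod1[of "b + i"] by simp
  qed (rule b(2))
  obtain c where "c + length f111000 \<le> length (apply_op u o2)"
    and c0: "occurs_at f111000 ((!) (apply_op u o2)) c"
    using C unfolding f_free_iff_no_occurrence by blast
  then have c: "c + 6 \<le> length u" "occurs_at f111000 ((!) (apply_op u o2)) c"
    by simp_all
  have WC: "apply_op u o2 ! j = (if j \<in> modified o2 then v ! j else u ! j)" if "j < length u" for j
    using nth_apply_op_member[OF o2S(1) d ok2 that] unfolding v_def by simp
  obtain j where "j \<in> modified o2" "c \<le> j" "j < c + length f111000"
  proof (rule occurrence_meets_difference[OF fu _ c(2)])
    show "c + length f111000 \<le> length u"
      using c(1) by simp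
    show "apply_op u o2 ! j = u ! j" if "j < length u" "j \<notin> modified o2" for j
      using WC[OF that(1)] that(2) by simp
  qed
  then have c1: "c \<le> e2" and c2: "q \<le> c + 5"
    using in2 by fastforce+
  have c3: "occurs_at f111000 (\<lambda>j. if j = q \<or> sw2 \<and> j = q + 1 then v ! j else u ! j) c"
  proof (subst occurs_at_shift[where g = "(!) (apply_op u o2)" and s = c])
    show "(if c + i = q \<or> sw2 \<and> c + i = q + 1 then v ! (c + i) else u ! (c + i)) = apply_op u o2 ! (c + i)"
      if "i < length f111000" for i
      using WC[of "c + i"] that c(1) mod2[of "c + i"] by simp
  qed (rule c(2))
  have agree': "v ! j = u ! j" if "j < q" "j \<noteq> p" "\<not> (sw1 \<and> j = p + 1)" for j
    using agree[of j] that mod1[of j] by simp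
  show False
    using window_contradiction[where u = "(!) u" and v = "(!) v", OF agree' op1 gap op2 unmerged
        a1[unfolded e1_def] a2 a3 b1[unfolded e1_def] b2 b3 c1[unfolded e2_def] c2 c3] .
qed

lemma exists_leftmost_op:
  assumes "finite S" "S \<noteq> {}"
  obtains x where "x \<in> S" "\<forall>y\<in>S. op_pos x \<le> op_pos y"
proof -
  have "Min (op_pos ` S) \<in> op_pos ` S"
    using assms by simp
  then obtain x where "x \<in> S" "op_pos x = Min (op_pos ` S)"
    by auto
  then show ?thesis
    using that assms by simp
qed

lemma safe_step_111000:
  "finite S \<Longrightarrow> S \<noteq> {} \<Longrightarrow> disjoint_ops S \<Longrightarrow> \<forall>x\<in>S. op_ok u x \<Longrightarrow> no_mergeable_reps u S \<Longrightarrow>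
    f_free f111000 u \<Longrightarrow> f_free f111000 (apply_parallel u S) \<Longrightarrow>
    \<exists>x\<in>S. f_free f111000 (apply_op u x)"
proof (induction "card S" arbitrary: S rule: less_induct)
  case less
  note fin = less.prems(1) and ne = less.prems(2) and d = less.prems(3) and ok = less.prems(4)
    and nm = less.prems(5) and fu = less.prems(6) and fv = less.prems(7)
  obtain o1 where o1: "o1 \<in> S" "\<forall>y\<in>S. op_pos o1 \<le> op_pos y"
    using exists_leftmost_op[OF fin ne] by blast
  show ?case
  proof (rule ccontr)
    assume unsafe: "\<not> (\<exists>x\<in>S. f_free f111000 (apply_op u x))"
    let ?S' = "S - {o1}"
    have res: "apply_parallel (apply_op u o1) ?S' = apply_parallel u S"
      by (rule apply_parallel_remove[OF o1(1) d ok])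
    have A: "\<not> f_free f111000 (apply_op u o1)"
      using unsafe o1(1) by blast
    have ne': "?S' \<noteq> {}"
    proof
      assume empty: "?S' = {}"
      have "apply_op u o1 = apply_parallel u S"
        using res unfolding empty by simp
      then show False
        using A fv by simp
    qed
    have "finite ?S'" "disjoint_ops ?S'" "\<forall>x\<in>?S'. op_ok u x" "no_mergeable_reps u ?S'"
      using fin disjoint_ops_subset[OF d] ok nm unfolding no_mergeable_reps_def by auto
    then have B: "\<not> f_free f111000 (apply_parallel u ?S')"
      using less.hyps[of ?S'] card_Diff1_less[OF fin o1(1)] ne' fu unsafe by blast
    obtain o2 where o2: "o2 \<in> ?S'" "\<forall>y\<in>?S'. op_pos o2 \<le> op_pos y"
      using exists_leftmost_op[OF _ ne'] fin by blast
    have C: "\<not> f_free f111000 (apply_op u o2)"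
      using unsafe o2(1) by blast
    show False
      by (rule leftmost_ops_not_all_unsafe[OF d ok nm fu fv o1 o2 A B C])
  qed
qed

lemma safe_step_property_111000: "safe_step_property f111000"
  unfolding safe_step_property_def using safe_step_111000 by blast

theorem mainTheorem4:
  shows "tilde_isometric [True, True, True, False, False, False]"
  by (rule tilde_isometric_if_safe_step_property[OF safe_step_property_111000])

end
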